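(* Let $R>0$ and let $S$ be the pseudosphere of radius $R$, parametrized by \[ \phi(u,v)=R\big(\sin v\cos u,\ \sin v\sin u,\ \ln\tan(v/2)+\cos v\big),\qquad 0<v<\pi/2, \] and oriented by the unit normal $N=\frac{\phi_u\times\phi_v}{\|\phi_u\times\phi_v\|}$. Let $0<\theta<\pi$ and let $\gamma$ be a loxodrome on $S$ with characteristic angle $\theta$, parametrized by arc length. Then the geodesic curvature of $\gamma$ is constant and equal to \[ k=-\frac{1}{R}\cos\theta. \]
   Context: For an oriented surface $S\subset\mathbb{R}^3$ with unit normal field $N$, the geodesic curvature of a unit-speed curve $\alpha$ on $S$ is $k=\langle\alpha'',N\times\alpha'\rangle$. The parallels of the pseudosphere are the circles $t\mapsto\phi(t,v)$ for fixed $v$. A loxodrome with characteristic angle $\theta\in(0,\pi)$ is a curve meeting all parallels at the fixed angle $\theta$, where $\theta$ is the signed angle (with respect to $N$) from the velocity $\frac{\partial}{\partial t}\phi(t,v)$ of the parallel to the velocity of the curve; the curve is oriented accordingly. *)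

theory Defs
  imports "HOL-Analysis.Analysis" "HOL-Analysis.Cross3"
begin

definition pseudosphere :: "real \<Rightarrow> real \<Rightarrow> real \<Rightarrow> real^3" where
  "pseudosphere R u v =
     R *\<^sub>R vector [sin v * cos u, sin v * sin u, ln (tan (v / 2)) + cos v]"

definition phi_u :: "real \<Rightarrow> real \<Rightarrow> real \<Rightarrow> real^3" where
  "phi_u R u v = vector_derivative (\<lambda>t. pseudosphere R t v) (at u)"

definition phi_v :: "real \<Rightarrow> real \<Rightarrow> real \<Rightarrow> real^3" where
  "phi_v R u v = vector_derivative (\<lambda>t. pseudosphere R u t) (at v)"

definition pseudo_normal :: "real \<Rightarrow> real \<Rightarrow> real \<Rightarrow> real^3" where
  "pseudo_normal R u v =
     (1 / norm (cross3 (phi_u R u v) (phi_v R u v))) *\<^sub>R (cross3 (phi_u R u v) (phi_v R u v))"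

text \<open>A velocity vector w at the point phi(u,v) makes signed angle theta (w.r.t. N)
  with the velocity phi_u of the parallel: w is obtained from the unit vector
  e = phi_u/|phi_u| by rotating by theta in the tangent plane oriented by N.\<close>
definition signed_angle_from_parallel :: "real \<Rightarrow> real \<Rightarrow> real \<Rightarrow> real \<Rightarrow> real^3 \<Rightarrow> bool" where
  "signed_angle_from_parallel R \<theta> u v w \<longleftrightarrow>
     (let e = (1 / norm (phi_u R u v)) *\<^sub>R phi_u R u v
      in w = cos \<theta> *\<^sub>R e + sin \<theta> *\<^sub>R (cross3 (pseudo_normal R u v) e))"

end

theory Submission
  imports Defs
begin

text \<open>Write \<open>(a, b) = sin v (cos u, sin u)\<close> for the horizontal position on the pseudosphere
  divided by \<open>R\<close>. The loxodrome condition makes the unit velocity a function of the position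
  alone, \<open>\<gamma>' = F(a, b)\<close> with \<open>F\<close> explicit on the punctured unit disc, so
  \<open>\<gamma>'' = DF(a, b)(a', b')\<close> without any regularity of the coordinates \<open>u, v\<close> along the curve.
  Evaluated on the surface this acceleration is
  \<open>(sin \<theta> / R) \<gamma>' - (cos\<^sup>2 \<theta> / (R sin v)) (cos u, sin u, 0) - (sin\<^sup>2 \<theta> / (R cos v)) e\<^sub>3\<close>,
  and pairing it with \<open>N \<times> \<gamma>'\<close> gives \<open>-(cos\<^sup>3 \<theta> + sin\<^sup>2 \<theta> cos \<theta>) / R = - cos \<theta> / R\<close>.\<close>

lemma vector3_eq_axis:
  "(vector [a, b, c] :: real^3) = a *\<^sub>R axis 1 1 + b *\<^sub>R axis 2 1 + c *\<^sub>R axis 3 1"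
  unfolding vec_eq_iff forall_3 by (simp add: axis_def)

lemma has_vector_derivative_vector3:
  assumes "(f1 has_real_derivative d1) F" "(f2 has_real_derivative d2) F"
    and "(f3 has_real_derivative d3) F"
  shows "((\<lambda>t. vector [f1 t, f2 t, f3 t] :: real^3) has_vector_derivative vector [d1, d2, d3]) F"
proof -
  have scaled: "((\<lambda>t. f t *\<^sub>R c) has_vector_derivative d *\<^sub>R c) F"
    if "(f has_real_derivative d) F" for f d and c :: "real^3"
    using bounded_linear.has_vector_derivative[OF bounded_linear_scaleR_left,
        OF that[unfolded has_real_derivative_iff_has_vector_derivative]] by blast
  show ?thesis
    unfolding vector3_eq_axis by (intro has_vector_derivative_add scaled assms)
qed

lemma has_real_derivative_vec_nth:
  assumes "(f has_vector_derivative (f' :: real^'n)) F"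
  shows "((\<lambda>t. f t $ i) has_real_derivative f' $ i) F"
  using bounded_linear.has_vector_derivative[OF bounded_linear_vec_nth assms]
  by (simp add: has_real_derivative_iff_has_vector_derivative)

lemma norm_vector3: "norm (vector [a, b, c] :: real^3) = sqrt (a\<^sup>2 + b\<^sup>2 + c\<^sup>2)"
  by (simp add: norm_eq_sqrt_inner inner_vec_def sum_3 power2_eq_square)

lemma inner_vector3: "inner (vector [a, b, c] :: real^3) (vector [x, y, z]) = a * x + b * y + c * z"
  by (simp add: inner_vec_def sum_3)

lemma polar_sum_squares: "((r::real) * cos u)\<^sup>2 + (r * sin u)\<^sup>2 = r\<^sup>2"
  by (simp add: power_mult_distrib) (use sin_cos_squared_add[of u] in algebra)

lemma pseudosphere_nth:
  "pseudosphere R u v $ 1 = R * (sin v * cos u)"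
  "pseudosphere R u v $ 2 = R * (sin v * sin u)"
  by (simp_all add: pseudosphere_def)

lemma phi_u_eq: "phi_u R u v = vector [- R * sin v * sin u, R * sin v * cos u, 0]"
proof -
  have "(\<lambda>t. pseudosphere R t v) =
      (\<lambda>t. vector [R * (sin v * cos t), R * (sin v * sin t), R * (ln (tan (v / 2)) + cos v)])"
    unfolding pseudosphere_def by (auto simp: vec_eq_iff forall_3)
  then have "((\<lambda>t. pseudosphere R t v) has_vector_derivative
      vector [- R * sin v * sin u, R * sin v * cos u, 0]) (at u)"
    by (auto intro!: has_vector_derivative_vector3 derivative_eq_intros)
  then show ?thesis
    unfolding phi_u_def by (rule vector_derivative_at)
qed

lemma phi_v_eq:
  assumes "0 < v" "v < pi / 2"
  shows "phi_v R u v = vector [R * cos v * cos u, R * cos v * sin u, R * (1 / sin v - sin v)]"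
proof -
  have cos_half: "cos (v / 2) > 0" and sin_half: "sin (v / 2) > 0"
    using assms by (auto intro!: cos_gt_zero sin_gt_zero)
  then have tan_half: "tan (v / 2) > 0"
    by (simp add: tan_def)
  have ln_tan_half_deriv: "inverse ((cos (v / 2))\<^sup>2) / (tan (v / 2) * 2) = 1 / sin v"
    using cos_half sin_half sin_double[of "v / 2"]
    by (simp add: tan_def field_simps power2_eq_square)
  moreover have "(\<lambda>t. pseudosphere R u t) =
      (\<lambda>t. vector [R * (sin t * cos u), R * (sin t * sin u), R * (ln (tan (t / 2)) + cos t)])"
    unfolding pseudosphere_def by (auto simp: vec_eq_iff forall_3)
  ultimately have "((\<lambda>t. pseudosphere R u t) has_vector_derivative
      vector [R * cos v * cos u, R * cos v * sin u, R * (1 / sin v - sin v)]) (at v)"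
    using cos_half tan_half
    by (auto intro!: has_vector_derivative_vector3 derivative_eq_intros)
  then show ?thesis
    unfolding phi_v_def by (rule vector_derivative_at)
qed

lemma norm_phi_u:
  assumes "R > 0" "0 < v" "v < pi / 2"
  shows "norm (phi_u R u v) = R * sin v"
proof -
  have "sin v > 0"
    using assms by (intro sin_gt_zero) auto
  moreover have "(- R * sin v * sin u)\<^sup>2 + (R * sin v * cos u)\<^sup>2 + 0\<^sup>2 = (R * sin v)\<^sup>2"
    using polar_sum_squares[of "R * sin v" u] by (simp add: algebra_simps)
  ultimately show ?thesis
    using assms unfolding phi_u_eq norm_vector3 by simp
qed

lemma pseudo_normal_eq:
  assumes "R > 0" "0 < v" "v < pi / 2"
  shows "pseudo_normal R u v = vector [cos u * cos v, sin u * cos v, - sin v]"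
proof -
  have sin_pos: "sin v > 0" and cos_pos: "cos v > 0"
    using assms by (auto intro!: sin_gt_zero cos_gt_zero)
  have "cross3 (phi_u R u v) (phi_v R u v) =
      (R\<^sup>2 * cos v) *\<^sub>R vector [cos u * cos v, sin u * cos v, - sin v]"
    unfolding phi_u_eq phi_v_eq[OF assms(2,3)] cross3_def vec_eq_iff forall_3
    using sin_pos
    by (simp add: field_simps)
      (use sin_cos_squared_add[of u] sin_cos_squared_add[of v] in algebra)
  moreover have "norm (vector [cos u * cos v, sin u * cos v, - sin v] :: real^3) = 1"
    unfolding norm_vector3 using polar_sum_squares[of "cos v" u]
    by (simp add: algebra_simps)
  ultimately show ?thesis
    unfolding pseudo_normal_def using assms(1) cos_pos by simp
qed

definition loxodrome_tangent :: "real \<Rightarrow> real \<Rightarrow> real \<Rightarrow> real^3" where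
  "loxodrome_tangent \<theta> u v =
     vector [sin \<theta> * sin v * cos u - cos \<theta> * sin u,
             sin \<theta> * sin v * sin u + cos \<theta> * cos u,
             sin \<theta> * cos v]"

lemma signed_angle_from_parallel_iff:
  assumes "R > 0" "0 < v" "v < pi / 2"
  shows "signed_angle_from_parallel R \<theta> u v w \<longleftrightarrow> w = loxodrome_tangent \<theta> u v"
proof -
  have "sin v > 0"
    using assms by (intro sin_gt_zero) auto
  then have unit_parallel:
    "(1 / norm (phi_u R u v)) *\<^sub>R phi_u R u v = vector [- sin u, cos u, 0]"
    using assms(1) unfolding norm_phi_u[OF assms] by (simp add: phi_u_eq vec_eq_iff forall_3)
  have "cross3 (vector [cos u * cos v, sin u * cos v, - sin v]) (vector [- sin u, cos u, 0]) =
      vector [sin v * cos u, sin v * sin u, cos v]"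
    unfolding cross3_def vec_eq_iff forall_3
    by simp (use sin_cos_squared_add[of u] in algebra)
  then show ?thesis
    unfolding signed_angle_from_parallel_def Let_def unit_parallel pseudo_normal_eq[OF assms]
      loxodrome_tangent_def
    by (simp add: vec_eq_iff forall_3 algebra_simps)
qed

lemma cross3_pseudo_normal_loxodrome_tangent:
  assumes "R > 0" "0 < v" "v < pi / 2"
  shows "cross3 (pseudo_normal R u v) (loxodrome_tangent \<theta> u v) =
    vector [cos \<theta> * sin v * cos u + sin \<theta> * sin u,
            cos \<theta> * sin v * sin u - sin \<theta> * cos u,
            cos \<theta> * cos v]"
  unfolding pseudo_normal_eq[OF assms] loxodrome_tangent_def cross3_def vec_eq_iff forall_3
  by simp (use sin_cos_squared_add[of u] sin_cos_squared_add[of v] in algebra)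

definition loxodrome_field :: "real \<Rightarrow> real \<Rightarrow> real \<Rightarrow> real^3" where
  "loxodrome_field \<theta> a b =
     vector [sin \<theta> * a - cos \<theta> * b / sqrt (a\<^sup>2 + b\<^sup>2),
             sin \<theta> * b + cos \<theta> * a / sqrt (a\<^sup>2 + b\<^sup>2),
             sin \<theta> * sqrt (1 - (a\<^sup>2 + b\<^sup>2))]"

definition loxodrome_field_deriv :: "real \<Rightarrow> real \<Rightarrow> real \<Rightarrow> real \<Rightarrow> real \<Rightarrow> real^3" where
  "loxodrome_field_deriv \<theta> a b a' b' =
     (let q = a\<^sup>2 + b\<^sup>2; d = a * a' + b * b'
      in vector [sin \<theta> * a' - cos \<theta> * (b' * q - b * d) / (q * sqrt q),
                 sin \<theta> * b' + cos \<theta> * (a' * q - a * d) / (q * sqrt q),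
                 - sin \<theta> * d / sqrt (1 - q)])"

lemma loxodrome_field_pseudosphere:
  assumes "0 < v" "v < pi / 2"
  shows "loxodrome_field \<theta> (sin v * cos u) (sin v * sin u) = loxodrome_tangent \<theta> u v"
proof -
  have "sin v > 0" "cos v > 0"
    using assms by (auto intro!: sin_gt_zero cos_gt_zero)
  then show ?thesis
    unfolding loxodrome_field_def loxodrome_tangent_def polar_sum_squares
    by (simp add: cos_squared_eq[symmetric] algebra_simps)
qed

lemma sin_polar_in_punctured_disc:
  assumes "0 < v" "v < pi / 2"
  shows "0 < (sin v * cos u)\<^sup>2 + (sin v * sin u)\<^sup>2" "(sin v * cos u)\<^sup>2 + (sin v * sin u)\<^sup>2 < 1"
proof -
  have "0 < (sin v)\<^sup>2" "0 < (cos v)\<^sup>2"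
    using assms sin_gt_zero[of v] cos_gt_zero[of v] by auto
  then show "0 < (sin v * cos u)\<^sup>2 + (sin v * sin u)\<^sup>2" "(sin v * cos u)\<^sup>2 + (sin v * sin u)\<^sup>2 < 1"
    unfolding polar_sum_squares using sin_cos_squared_add[of v] by linarith+
qed

lemma loxodrome_field_has_vector_derivative:
  assumes A: "(A has_real_derivative a') (at s within S)"
    and B: "(B has_real_derivative b') (at s within S)"
    and pos: "0 < (A s)\<^sup>2 + (B s)\<^sup>2" and lt1: "(A s)\<^sup>2 + (B s)\<^sup>2 < 1"
  shows "((\<lambda>t. loxodrome_field \<theta> (A t) (B t)) has_vector_derivative
           loxodrome_field_deriv \<theta> (A s) (B s) a' b') (at s within S)"
proof -
  define q where "q = (A s)\<^sup>2 + (B s)\<^sup>2"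
  define d where "d = A s * a' + B s * b'"
  have root_pos: "sqrt q > 0"
    using pos by (simp add: q_def)
  have sum_sq: "((\<lambda>t. (A t)\<^sup>2 + (B t)\<^sup>2) has_real_derivative 2 * d) (at s within S)"
    unfolding d_def by (auto intro!: derivative_eq_intros A B)
  have root: "((\<lambda>t. sqrt ((A t)\<^sup>2 + (B t)\<^sup>2)) has_real_derivative d / sqrt q) (at s within S)"
    using DERIV_chain2[OF DERIV_real_sqrt sum_sq] pos by (simp add: q_def field_simps)
  have coroot: "((\<lambda>t. c * sqrt (1 - ((A t)\<^sup>2 + (B t)\<^sup>2))) has_real_derivative
      - c * d / sqrt (1 - q)) (at s within S)" for c
    using DERIV_cmult[OF DERIV_chain2[OF DERIV_real_sqrt DERIV_diff[OF DERIV_const sum_sq]]] lt1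
    by (simp add: q_def field_simps)
  have "sqrt q * sqrt q = q"
    using pos by (simp add: q_def)
  then have quotient: "((\<lambda>t. c * X t / sqrt ((A t)\<^sup>2 + (B t)\<^sup>2)) has_real_derivative
      c * (x' * q - X s * d) / (q * sqrt q)) (at s within S)"
    if "(X has_real_derivative x') (at s within S)" for X x' c
    using DERIV_divide[OF DERIV_cmult[OF that] root] root_pos
    by (simp add: q_def[symmetric] field_simps)
  show ?thesis
    unfolding loxodrome_field_def loxodrome_field_deriv_def Let_def q_def[symmetric] d_def[symmetric]
    by (intro has_vector_derivative_vector3 DERIV_diff DERIV_add DERIV_cmult A B quotient coroot)
qed

lemma loxodrome_field_deriv_pseudosphere:
  assumes "R > 0" "0 < v" "v < pi / 2"
  shows "loxodrome_field_deriv \<theta> (sin v * cos u) (sin v * sin u)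
           (loxodrome_tangent \<theta> u v $ 1 / R) (loxodrome_tangent \<theta> u v $ 2 / R) =
         (sin \<theta> / R) *\<^sub>R loxodrome_tangent \<theta> u v
         - ((cos \<theta>)\<^sup>2 / (R * sin v)) *\<^sub>R vector [cos u, sin u, 0]
         - ((sin \<theta>)\<^sup>2 / (R * cos v)) *\<^sub>R vector [0, 0, 1]"
proof -
  have sin_pos: "sin v > 0" and cos_pos: "cos v > 0"
    using assms by (auto intro!: sin_gt_zero cos_gt_zero)
  have d: "sin v * cos u * (loxodrome_tangent \<theta> u v $ 1 / R)
      + sin v * sin u * (loxodrome_tangent \<theta> u v $ 2 / R) = sin \<theta> * (sin v)\<^sup>2 / R"
    unfolding loxodrome_tangent_def using assms(1)
    by (simp add: field_simps) (use sin_cos_squared_add[of u] in algebra)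
  have sqrt_cos: "sqrt (1 - (sin v)\<^sup>2) = cos v"
    using cos_pos by (simp add: cos_squared_eq[symmetric])
  show ?thesis
    unfolding loxodrome_field_deriv_def Let_def polar_sum_squares d sqrt_cos
    using sin_pos cos_pos assms(1)
    by (simp add: vec_eq_iff forall_3 loxodrome_tangent_def field_simps power2_eq_square)
      (use sin_cos_squared_add[of v] in algebra)
qed

lemma loxodrome_geodesic_curvature:
  assumes "R > 0" "0 < v" "v < pi / 2"
  shows "inner (loxodrome_field_deriv \<theta> (sin v * cos u) (sin v * sin u)
             (loxodrome_tangent \<theta> u v $ 1 / R) (loxodrome_tangent \<theta> u v $ 2 / R))
           (cross3 (pseudo_normal R u v) (loxodrome_tangent \<theta> u v)) = - cos \<theta> / R"
proof -
  have sin_pos: "sin v > 0" and cos_pos: "cos v > 0"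
    using assms by (auto intro!: sin_gt_zero cos_gt_zero)
  let ?n = "cross3 (pseudo_normal R u v) (loxodrome_tangent \<theta> u v)"
  have "inner (loxodrome_tangent \<theta> u v) ?n = 0"
    by (rule dot_cross_self(2))
  moreover have "inner (vector [cos u, sin u, 0]) ?n = cos \<theta> * sin v"
    unfolding cross3_pseudo_normal_loxodrome_tangent[OF assms] inner_vector3
    by (simp add: algebra_simps) (use sin_cos_squared_add[of u] in algebra)
  moreover have "inner (vector [0, 0, 1]) ?n = cos \<theta> * cos v"
    unfolding cross3_pseudo_normal_loxodrome_tangent[OF assms] inner_vector3 by simp
  ultimately have "inner (loxodrome_field_deriv \<theta> (sin v * cos u) (sin v * sin u)
             (loxodrome_tangent \<theta> u v $ 1 / R) (loxodrome_tangent \<theta> u v $ 2 / R)) ?n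
      = - cos \<theta> * (cos \<theta>)\<^sup>2 / R - cos \<theta> * (sin \<theta>)\<^sup>2 / R"
    unfolding loxodrome_field_deriv_pseudosphere[OF assms] inner_diff_left inner_scaleR_left
    using sin_pos cos_pos by (simp add: field_simps power2_eq_square)
  also have "\<dots> = - cos \<theta> / R"
    by (simp add: cos_squared_eq algebra_simps diff_divide_distrib)
  finally show ?thesis .
qed

theorem proposition23:
  fixes R \<theta> :: real and I :: "real set"
    and \<gamma> \<gamma>' \<gamma>'' :: "real \<Rightarrow> real^3" and u v :: "real \<Rightarrow> real"
  assumes R_pos: "R > 0"
    and theta: "0 < \<theta>" "\<theta> < pi"
    and I: "open I" "is_interval I"
    and on_S: "\<And>s. s \<in> I \<Longrightarrow> 0 < v s \<and> v s < pi / 2 \<and> \<gamma> s = pseudosphere R (u s) (v s)"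
    and cont: "continuous_on I u" "continuous_on I v"
    and d1: "\<And>s. s \<in> I \<Longrightarrow> (\<gamma> has_vector_derivative \<gamma>' s) (at s)"
    and d2: "\<And>s. s \<in> I \<Longrightarrow> (\<gamma>' has_vector_derivative \<gamma>'' s) (at s)"
    and unit_speed: "\<And>s. s \<in> I \<Longrightarrow> norm (\<gamma>' s) = 1"
    and loxodrome: "\<And>s. s \<in> I \<Longrightarrow> signed_angle_from_parallel R \<theta> (u s) (v s) (\<gamma>' s)"
  shows "\<forall>s\<in>I. inner (\<gamma>'' s) (cross3 (pseudo_normal R (u s) (v s)) (\<gamma>' s)) = - cos \<theta> / R"
proof
  fix s assume s: "s \<in> I"
  have v_range: "0 < v t" "v t < pi / 2" if "t \<in> I" for t
    using on_S[OF that] by auto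
  have tangent: "\<gamma>' t = loxodrome_tangent \<theta> (u t) (v t)" if "t \<in> I" for t
    using loxodrome[OF that] signed_angle_from_parallel_iff[OF R_pos v_range[OF that]] by simp
  have planar: "\<gamma> t $ 1 / R = sin (v t) * cos (u t)" "\<gamma> t $ 2 / R = sin (v t) * sin (u t)"
    if "t \<in> I" for t
    using on_S[OF that] R_pos by (simp_all add: pseudosphere_nth)
  have field: "loxodrome_field \<theta> (\<gamma> t $ 1 / R) (\<gamma> t $ 2 / R) = \<gamma>' t" if "t \<in> I" for t
    unfolding planar[OF that] tangent[OF that] using v_range[OF that]
    by (rule loxodrome_field_pseudosphere)
  have planar_deriv: "((\<lambda>t. \<gamma> t $ i / R) has_real_derivative \<gamma>' s $ i / R) (at s)" for i
    by (intro DERIV_cdivide has_real_derivative_vec_nth d1 s)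
  have "(\<gamma>' has_vector_derivative loxodrome_field_deriv \<theta> (sin (v s) * cos (u s))
      (sin (v s) * sin (u s)) (\<gamma>' s $ 1 / R) (\<gamma>' s $ 2 / R)) (at s)"
    using has_vector_derivative_transform_within_open[OF
        loxodrome_field_has_vector_derivative[OF planar_deriv[of 1] planar_deriv[of 2]] I(1) s field]
      sin_polar_in_punctured_disc[OF v_range[OF s]]
    by (simp add: planar[OF s])
  then have "\<gamma>'' s = loxodrome_field_deriv \<theta> (sin (v s) * cos (u s)) (sin (v s) * sin (u s))
      (loxodrome_tangent \<theta> (u s) (v s) $ 1 / R) (loxodrome_tangent \<theta> (u s) (v s) $ 2 / R)"
    using vector_derivative_unique_at[OF d2[OF s]] by (simp add: tangent[OF s])
  then show "inner (\<gamma>'' s) (cross3 (pseudo_normal R (u s) (v s)) (\<gamma>' s)) = - cos \<theta> / R"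
    using loxodrome_geodesic_curvature[OF R_pos v_range[OF s]] tangent[OF s] by simp
qed

end
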